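(* Let $\mathcal{V}$ be a finite set of $n$ nodes, each carrying a label in $\{1,\dots,h\}$, and for $s\in[h]$ let $\mathcal{C}_s\subseteq\mathcal{V}$ be the set of nodes with label $s$, so that $\mathcal{V}=\dot{\bigcup}_{s\in[h]}\mathcal{C}_s$. Let $\mathbf{F}\in\{0,1\}^{n\times h}$ be the label-membership indicator matrix, $F_{i,s}=1$ if node $i$ has label $s$ and $F_{i,s}=0$ otherwise. Let $v\ge1$ and define $\widetilde{\mathbf{M}}\in\mathbb{R}^{h\times v}$ by $\widetilde{M}_{s,j}=\frac{|\mathcal{C}_s|}{\sqrt{nv}}$. For a partition $\mathcal{V}=\dot{\bigcup}_{j\in[v]}\mathcal{V}_j$ into nonempty parts, let $\mathbf{H}\in\mathbb{R}^{n\times v}$ be its normalized group-membership indicator matrix, $H_{ij}=1/\sqrt{|\mathcal{V}_j|}$ if $i\in\mathcal{V}_j$ and $H_{ij}=0$ otherwise. Then the partition is fair and balanced if and only if $\mathbf{F}^{\intercal}\mathbf{H}=\widetilde{\mathbf{M}}$.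
   Context: A partition $\mathcal{V}=\dot{\bigcup}_{j\in[v]}\mathcal{V}_j$ is called balanced if $|\mathcal{V}_j|=n/v$ for every $j\in[v]$, and fair if for every $j\in[v]$ and $s\in[h]$ the proportion of label $s$ in the part equals its proportion in the whole set: $\frac{|\mathcal{C}_s\cap\mathcal{V}_j|}{|\mathcal{V}_j|}=\frac{|\mathcal{C}_s|}{n}$. *)

theory Defs
  imports "HOL-Analysis.Analysis"
begin

text \<open>Nodes are 0..<n; lab i in {1..h} is the label of node i; grp i in {1..v} is the
  index of the part of the partition containing node i.\<close>

definition label_class :: "nat \<Rightarrow> (nat \<Rightarrow> nat) \<Rightarrow> nat \<Rightarrow> nat set" where
  "label_class n lab s = {i. i < n \<and> lab i = s}"

definition part_set :: "nat \<Rightarrow> (nat \<Rightarrow> nat) \<Rightarrow> nat \<Rightarrow> nat set" where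
  "part_set n grp j = {i. i < n \<and> grp i = j}"

definition F_mat :: "(nat \<Rightarrow> nat) \<Rightarrow> nat \<Rightarrow> nat \<Rightarrow> real" where
  "F_mat lab i s = (if lab i = s then 1 else 0)"

definition H_mat :: "nat \<Rightarrow> (nat \<Rightarrow> nat) \<Rightarrow> nat \<Rightarrow> nat \<Rightarrow> real" where
  "H_mat n grp i j = (if grp i = j then 1 / sqrt (real (card (part_set n grp j))) else 0)"

definition FtH :: "nat \<Rightarrow> (nat \<Rightarrow> nat) \<Rightarrow> (nat \<Rightarrow> nat) \<Rightarrow> nat \<Rightarrow> nat \<Rightarrow> real" where
  "FtH n lab grp s j = (\<Sum>i<n. F_mat lab i s * H_mat n grp i j)"

definition M_tilde :: "nat \<Rightarrow> nat \<Rightarrow> (nat \<Rightarrow> nat) \<Rightarrow> nat \<Rightarrow> nat \<Rightarrow> real" where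
  "M_tilde n v lab s j = real (card (label_class n lab s)) / sqrt (real n * real v)"

definition balanced :: "nat \<Rightarrow> nat \<Rightarrow> (nat \<Rightarrow> nat) \<Rightarrow> bool" where
  "balanced n v grp \<longleftrightarrow> (\<forall>j\<in>{1..v}. real (card (part_set n grp j)) = real n / real v)"

definition fair :: "nat \<Rightarrow> nat \<Rightarrow> nat \<Rightarrow> (nat \<Rightarrow> nat) \<Rightarrow> (nat \<Rightarrow> nat) \<Rightarrow> bool" where
  "fair n h v lab grp \<longleftrightarrow> (\<forall>j\<in>{1..v}. \<forall>s\<in>{1..h}.
      real (card (label_class n lab s \<inter> part_set n grp j)) / real (card (part_set n grp j))
      = real (card (label_class n lab s)) / real n)"

end

theory Submission
  imports Defs
begin

text \<open>Entry \<open>(s, j)\<close> of \<open>F\<^sup>T H\<close> is \<open>|C\<^sub>s \<inter> V\<^sub>j| / sqrt |V\<^sub>j|\<close>, while every entry of \<open>M\<close> in row \<open>s\<close> is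
  \<open>|C\<^sub>s| / sqrt (n v)\<close>. Fix a part \<open>j\<close> and write \<open>p = |V\<^sub>j|\<close>. Summing the equations of column \<open>j\<close>
  over \<open>s\<close> gives \<open>sqrt p = n / sqrt (n v)\<close>, i.e. \<open>p = n / v\<close>; conversely \<open>p = n / v\<close> means
  \<open>sqrt p * sqrt (n v) = n\<close>, and then the column equations are exactly the fairness proportions
  \<open>|C\<^sub>s \<inter> V\<^sub>j| / p = |C\<^sub>s| / n\<close> rescaled by \<open>sqrt p\<close>.\<close>

lemma sqrt_mult_sqrt_eq_iff:
  fixes p N v :: real
  assumes "p > 0" "N > 0" "v > 0"
  shows "sqrt p * sqrt (N * v) = N \<longleftrightarrow> p = N / v"
proof -
  have "sqrt p * sqrt (N * v) = N \<longleftrightarrow> sqrt (p * (N * v)) = sqrt (N\<^sup>2)"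
    using assms by (simp add: real_sqrt_mult)
  also have "\<dots> \<longleftrightarrow> p * (N * v) = N\<^sup>2"
    by (rule real_sqrt_eq_iff)
  also have "\<dots> \<longleftrightarrow> p = N / v"
    using assms by (auto simp: field_simps power2_eq_square)
  finally show ?thesis .
qed

lemma proportional_column_iff:
  fixes x c :: "'a \<Rightarrow> real" and p N v :: real
  assumes sum_x: "sum x S = p" and sum_c: "sum c S = N"
    and pos: "p > 0" "N > 0" "v > 0"
  shows "(p = N / v \<and> (\<forall>s\<in>S. x s / p = c s / N)) \<longleftrightarrow>
         (\<forall>s\<in>S. x s / sqrt p = c s / sqrt (N * v))"
proof -
  define q r where "q = sqrt p" and "r = sqrt (N * v)"
  have q: "q > 0" "q * q = p" and r: "r > 0"
    using pos by (simp_all add: q_def r_def)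
  have scale_iff: "p = N / v \<longleftrightarrow> q * r = N"
    using sqrt_mult_sqrt_eq_iff [OF pos] by (simp add: q_def r_def)
  show ?thesis
    unfolding q_def [symmetric] r_def [symmetric] scale_iff
  proof
    assume "q * r = N \<and> (\<forall>s\<in>S. x s / p = c s / N)"
    then have scale: "q * r = N" and proportions: "\<forall>s\<in>S. x s / p = c s / N"
      by auto
    show "\<forall>s\<in>S. x s / q = c s / r"
    proof
      fix s assume "s \<in> S"
      have "x s / q = x s / p * q"
        using q by (auto simp: field_simps)
      also have "\<dots> = c s * q / N"
        using proportions \<open>s \<in> S\<close> by simp
      also have "\<dots> = c s / r"
        using q r scale by (auto simp: field_simps)
      finally show "x s / q = c s / r" .
    qed
  next
    assume column: "\<forall>s\<in>S. x s / q = c s / r"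
    have "q * q = (\<Sum>s\<in>S. x s)"
      using q sum_x by simp
    also have "\<dots> = (\<Sum>s\<in>S. c s * q / r)"
      using column q r by (intro sum.cong) (auto simp: field_simps)
    also have "\<dots> = N * q / r"
      by (simp add: sum_c [symmetric] sum_divide_distrib [symmetric] sum_distrib_right [symmetric])
    finally have "q * (q * r) = q * N"
      using r by (simp add: field_simps)
    then have scale: "q * r = N"
      using q by simp
    have "x s / p = c s / N" if "s \<in> S" for s
    proof -
      have "x s / p = x s / q / q"
        using q(2) by (simp add: divide_divide_eq_left)
      also have "\<dots> = c s / r / q"
        using column that by simp
      finally show ?thesis
        by (simp add: scale [symmetric] divide_divide_eq_left ac_simps)
    qed
    with scale show "q * r = N \<and> (\<forall>s\<in>S. x s / p = c s / N)"
      by blast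
  qed
qed

lemma FtH_eq_card_div_sqrt:
  "FtH n lab grp s j =
     real (card (label_class n lab s \<inter> part_set n grp j)) / sqrt (real (card (part_set n grp j)))"
proof -
  let ?c = "1 / sqrt (real (card (part_set n grp j)))"
  have "FtH n lab grp s j = (\<Sum>i\<in>{..<n}. if lab i = s \<and> grp i = j then ?c else 0)"
    unfolding FtH_def F_mat_def H_mat_def by (intro sum.cong) auto
  also have "\<dots> = (\<Sum>i\<in>{i\<in>{..<n}. lab i = s \<and> grp i = j}. ?c)"
    by (rule sum.inter_filter [symmetric]) simp
  also have "{i\<in>{..<n}. lab i = s \<and> grp i = j} = label_class n lab s \<inter> part_set n grp j"
    by (auto simp: label_class_def part_set_def)
  finally show ?thesis
    by simp
qed

lemma sum_card_label_class_inter: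
  assumes "A \<subseteq> {..<n}" and "\<forall>i<n. lab i \<in> {1..h}"
  shows "(\<Sum>s\<in>{1..h}. card (label_class n lab s \<inter> A)) = card A"
proof -
  have "A = (\<Union>s\<in>{1..h}. label_class n lab s \<inter> A)"
    using assms by (auto simp: label_class_def)
  also have "card \<dots> = (\<Sum>s\<in>{1..h}. card (label_class n lab s \<inter> A))"
    using assms(1) by (intro card_UN_disjoint) (auto simp: label_class_def intro: finite_subset)
  finally show ?thesis
    by simp
qed

theorem theorem2:
  fixes n h v :: nat and lab grp :: "nat \<Rightarrow> nat"
  assumes lab_range: "\<forall>i<n. lab i \<in> {1..h}"
    and v_pos: "v \<ge> 1"
    and part_range: "\<forall>i<n. grp i \<in> {1..v}"
    and part_nonempty: "\<forall>j\<in>{1..v}. part_set n grp j \<noteq> {}"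
  shows "(fair n h v lab grp \<and> balanced n v grp) \<longleftrightarrow>
         (\<forall>s\<in>{1..h}. \<forall>j\<in>{1..v}. FtH n lab grp s j = M_tilde n v lab s j)"
proof -
  have part_sub: "part_set n grp j \<subseteq> {..<n}" for j
    by (auto simp: part_set_def)
  have part_pos: "card (part_set n grp j) > 0" if "j \<in> {1..v}" for j
    using part_nonempty that finite_subset [OF part_sub] by (auto simp: card_gt_0_iff)
  have "n > 0"
    using part_nonempty v_pos part_sub [of 1] by fastforce
  have label_sum: "(\<Sum>s\<in>{1..h}. card (label_class n lab s)) = n"
    using sum_card_label_class_inter [of "{..<n}" n lab h] lab_range
    by (simp add: Int_absorb2 label_class_def subset_eq)
  have column: "(real (card (part_set n grp j)) = real n / real v \<and>
      (\<forall>s\<in>{1..h}. real (card (label_class n lab s \<inter> part_set n grp j)) / real (card (part_set n grp j))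
                 = real (card (label_class n lab s)) / real n))
      \<longleftrightarrow> (\<forall>s\<in>{1..h}. FtH n lab grp s j = M_tilde n v lab s j)" if "j \<in> {1..v}" for j
    unfolding FtH_eq_card_div_sqrt M_tilde_def
    using part_pos [OF that] \<open>n > 0\<close> v_pos
      sum_card_label_class_inter [OF part_sub [of j] lab_range] label_sum
    by (intro proportional_column_iff) (simp_all flip: of_nat_sum)
  show ?thesis
    unfolding fair_def balanced_def using column by blast
qed

end
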